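(* Suppose that Assumptions (A1)–(A7) hold. Fix $0<\epsilon\le1$ and a constant $\bar m>0$ such that for every $\lambda\in[0,1]$, every $(u,m)\in C^{2,\frac12}(\mathbb{T})\times C^{2,\frac12}(\mathbb{T};(0,\infty))$ with $F(u,m,\lambda)=0$ satisfies $m>\bar m$ on $\mathbb{T}$. Let $\Lambda$ be the set of $\lambda\in[0,1]$ for which there exists $(u,m)\in C^{2,\frac12}(\mathbb{T})\times C^{2,\frac12}(\mathbb{T})$ with $m\ge\bar m$ on $\mathbb{T}$ and $F(u,m,\lambda)=0$. Then $\Lambda$ is a closed subset of $[0,1]$.
   Context: Let $\mathbb{T}=\mathbb{R}/\mathbb{Z}$ be the one-dimensional torus; functions on $\mathbb{T}$ are identified with $1$-periodic functions on $\mathbb{R}$. $C^{k,\frac12}(\mathbb{T})$ denotes the functions of class $C^k$ on $\mathbb{T}$ whose $k$-th derivative is $\frac12$-Hölder continuous, and $C^{2,\frac12}(\mathbb{T};(0,\infty))$ the positive such functions. Let $H:\mathbb{R}\to\mathbb{R}$ be of class $C^2$, $V:\mathbb{T}\to\mathbb{R}$ continuous, and $\alpha>0$. For $(u,m,\lambda)\in C^{2,\frac12}(\mathbb{T})\times C^{2,\frac12}(\mathbb{T};(0,\infty))\times[0,1]$ define $$F(u,m,\lambda)=\begin{bmatrix} u-u_{xx}+H(u_x)+\lambda V-m^\alpha-\epsilon(m-m_{xx})\\ m-m_{xx}-(H'(u_x)m)_x-1+\epsilon(u-u_{xx})\end{bmatrix}.$$ Assumptions: (A1) there exist constants $C_1,C_2,C_3>0$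 and $\gamma>1$ such that $-C_1+C_2|p|^\gamma\le H(p)\le C_1+C_3|p|^\gamma$ for all $p\in\mathbb{R}$. (A2) There exist constants $\tilde C_1,\tilde C_2,\tilde C_3>0$ such that $-\tilde C_1+\tilde C_2|p|^\gamma\le pH'(p)-H(p)\le \tilde C_1+\tilde C_3|p|^\gamma$ for all $p$ (same $\gamma$ as in (A1)). (A3) $V$ is of class $C^2$. (A4) $H$ is convex. (A5) $H$ is of class $C^4$. (A6) $\gamma<2$. (A7) There exists $\bar C>0$ with $|H'(p)|\le \bar C(1+|p|^{\gamma-1})$ for all $p$. *)

theory Defs
  imports "HOL-Analysis.Analysis"
begin

text \<open>Functions on the torus R/Z are identified with 1-periodic functions on R.\<close>
definition periodic1 :: "(real \<Rightarrow> real) \<Rightarrow> bool" where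
  "periodic1 f \<longleftrightarrow> (\<forall>x. f (x + 1) = f x)"

definition Ck :: "nat \<Rightarrow> (real \<Rightarrow> real) \<Rightarrow> bool" where
  "Ck k f \<longleftrightarrow> (\<forall>j<k. \<forall>x. ((deriv ^^ j) f) differentiable (at x))
                 \<and> continuous_on UNIV ((deriv ^^ k) f)"

definition holder_half :: "(real \<Rightarrow> real) \<Rightarrow> bool" where
  "holder_half g \<longleftrightarrow> (\<exists>C. \<forall>x y. \<bar>g x - g y\<bar> \<le> C * \<bar>x - y\<bar> powr (1/2))"

definition C2_half :: "(real \<Rightarrow> real) \<Rightarrow> bool" where
  "C2_half f \<longleftrightarrow> periodic1 f \<and> Ck 2 f \<and> holder_half ((deriv ^^ 2) f)"

definition F1 :: "(real \<Rightarrow> real) \<Rightarrow> (real \<Rightarrow> real) \<Rightarrow> real \<Rightarrow> real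
      \<Rightarrow> (real \<Rightarrow> real) \<Rightarrow> (real \<Rightarrow> real) \<Rightarrow> real \<Rightarrow> real \<Rightarrow> real" where
  "F1 H V \<alpha> \<epsilon> u m lam x =
     u x - (deriv ^^ 2) u x + H (deriv u x) + lam * V x - m x powr \<alpha>
       - \<epsilon> * (m x - (deriv ^^ 2) m x)"

definition F2 :: "(real \<Rightarrow> real) \<Rightarrow> real
      \<Rightarrow> (real \<Rightarrow> real) \<Rightarrow> (real \<Rightarrow> real) \<Rightarrow> real \<Rightarrow> real" where
  "F2 H \<epsilon> u m x =
     m x - (deriv ^^ 2) m x - deriv (\<lambda>y. deriv H (deriv u y) * m y) x - 1
       + \<epsilon> * (u x - (deriv ^^ 2) u x)"

definition F_zero :: "(real \<Rightarrow> real) \<Rightarrow> (real \<Rightarrow> real) \<Rightarrow> real \<Rightarrow> real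
      \<Rightarrow> (real \<Rightarrow> real) \<Rightarrow> (real \<Rightarrow> real) \<Rightarrow> real \<Rightarrow> bool" where
  "F_zero H V \<alpha> \<epsilon> u m lam \<longleftrightarrow>
     (\<forall>x. F1 H V \<alpha> \<epsilon> u m lam x = 0 \<and> F2 H \<epsilon> u m x = 0)"

end

theory Submission
  imports Defs "HOL-Complex_Analysis.Great_Picard"
begin

text \<open>Let \<open>\<lambda>\<^sub>n \<in> \<Lambda>\<close> converge to \<open>\<lambda>\<close>, with solutions \<open>(u\<^sub>n, m\<^sub>n)\<close>, \<open>m\<^sub>n \<ge> mbar\<close>. Testing the two equations
  against \<open>m\<^sub>n\<close> and \<open>u\<^sub>n\<close> gives a uniform \<open>H\<^sup>1\<close> bound; the one-dimensional Sobolev embedding turns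
  it into uniform bounds on \<open>u\<^sub>n\<close>, \<open>m\<^sub>n\<close> and on the fluxes \<open>u\<^sub>n' - \<epsilon> m\<^sub>n'\<close> and
  \<open>m\<^sub>n' + H'(u\<^sub>n') m\<^sub>n + \<epsilon> u\<^sub>n'\<close>, and the monotonicity of \<open>H'\<close> then bounds \<open>u\<^sub>n'\<close> and \<open>m\<^sub>n'\<close>.
  The system is linear in the second derivatives with determinant at least \<open>1\<close>, which bounds
  them too. A subsequence of the equi-Lipschitz functions \<open>u\<^sub>n, u\<^sub>n', m\<^sub>n, m\<^sub>n'\<close> converges
  pointwise; the second derivatives converge as well, being continuous functions of the lower order
  data, and dominated convergence identifies the limits as derivatives. The limit is a periodic
  \<open>C\<^sup>3\<close> solution for \<open>\<lambda>\<close> with \<open>m \<ge> mbar\<close>, in particular one with \<open>1/2\<close>-Hoelder second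
  derivatives.\<close>

lemma continuous_on_if_has_real_derivative:
  "(\<And>x. (f has_real_derivative f' x) (at x)) \<Longrightarrow> continuous_on S f"
  by (meson DERIV_isCont continuous_at_imp_continuous_on)

lemma integrable_on_Icc_if_continuous:
  "continuous_on UNIV f \<Longrightarrow> (f :: real \<Rightarrow> real) integrable_on {a..b}"
  using integrable_continuous_interval continuous_on_subset by blast

lemma has_integral_real_deriv:
  assumes "\<And>x. (g has_real_derivative g' x) (at x)" and "a \<le> b"
  shows "(g' has_integral (g b - g a)) {a..b}"
  using assms by (intro fundamental_theorem_of_calculus)
    (auto simp: has_real_derivative_iff_has_vector_derivative intro: has_vector_derivative_at_within)

lemma abs_diff_le_if_abs_deriv_le:
  assumes "\<And>x. (f has_real_derivative f' x) (at x)" and "\<And>x. \<bar>f' x\<bar> \<le> B"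
  shows "\<bar>f x - f y\<bar> \<le> B * \<bar>x - y\<bar>"
proof -
  have *: "\<bar>f b - f a\<bar> \<le> B * (b - a)" if "a < b" for a b
  proof -
    have "\<exists>z. a < z \<and> z < b \<and> f b - f a = (b - a) * f' z" by (rule MVT2[OF that assms(1)])
    then obtain z where "f b - f a = (b - a) * f' z" by blast
    then show ?thesis using assms(2)[of z] that by (simp add: abs_mult mult.commute mult_right_mono)
  qed
  consider "x < y" | "x = y" | "y < x" by linarith
  then show ?thesis using *[of x y] *[of y x] by cases (simp_all add: abs_minus_commute)
qed

lemma Ck_has_real_derivative:
  assumes "Ck k f" and "j < k"
  shows "((deriv ^^ j) f has_real_derivative (deriv ^^ Suc j) f x) (at x)"
  using assms unfolding Ck_def by (simp add: DERIV_deriv_iff_real_differentiable)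

lemma abs_powr_le_one_plus_square:
  fixes p e :: real
  assumes "0 \<le> e" and "e \<le> 2"
  shows "\<bar>p\<bar> powr e \<le> 1 + p\<^sup>2"
proof (cases "\<bar>p\<bar> \<le> 1")
  case True
  then have "\<bar>p\<bar> powr e \<le> 1" using assms by (intro powr_le1) auto
  then show ?thesis by (simp add: add_increasing2)
next
  case False
  then have "\<bar>p\<bar> powr e \<le> \<bar>p\<bar> powr 2" using assms by (intro powr_mono) auto
  then show ?thesis using False by simp
qed

lemma two_abs_le_one_plus_square: "2 * \<bar>a::real\<bar> \<le> 1 + a\<^sup>2"
  using sum_squares_bound[of "\<bar>a\<bar>" 1] by (simp add: power2_eq_square)

lemma periodic1_add_of_int:
  assumes "periodic1 f"
  shows "f (x + of_int k) = f x"
proof (induction k rule: int_induct[where k = 0])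
  case (step1 i)
  have "f (x + of_int (i + 1)) = f ((x + of_int i) + 1)" by (simp add: add.assoc)
  also have "\<dots> = f (x + of_int i)" using assms by (simp add: periodic1_def)
  finally show ?case using step1 by simp
next
  case (step2 i)
  have "f (x + of_int (i - 1) + 1) = f (x + of_int (i - 1))"
    using assms unfolding periodic1_def by blast
  moreover have "x + of_int (i - 1) + 1 = x + of_int i" by simp
  ultimately show ?case using step2 by simp
qed simp

lemma periodic1_frac: "periodic1 f \<Longrightarrow> f (frac x) = f x"
  using periodic1_add_of_int[of f "frac x" "\<lfloor>x\<rfloor>"] by (simp add: frac_def)

lemma periodic1_abs_le:
  assumes "periodic1 f" and "\<And>x. x \<in> {0..1} \<Longrightarrow> \<bar>f x\<bar> \<le> B"
  shows "\<bar>f x\<bar> \<le> B"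
  using assms(2)[of "frac x"] periodic1_frac[OF assms(1)] frac_lt_1[of x] by simp

lemma periodic1_bounded:
  assumes "periodic1 f" and "continuous_on UNIV f"
  obtains B where "\<And>x. \<bar>f x\<bar> \<le> B"
proof -
  have "compact (f ` {0..1})"
    using assms(2) by (intro compact_continuous_image) (auto intro: continuous_on_subset)
  then obtain B where "\<forall>y\<in>f ` {0..1}. \<bar>y\<bar> \<le> B"
    using compact_imp_bounded bounded_iff real_norm_def by metis
  then show thesis
    using that periodic1_abs_le[OF assms(1)] by blast
qed

lemma periodic1_deriv:
  assumes "periodic1 f" and "\<And>x. (f has_real_derivative f' x) (at x)"
  shows "periodic1 f'"
  unfolding periodic1_def
proof
  fix x
  have "((\<lambda>y. y + 1) has_real_derivative 1) (at x)" by (auto intro!: derivative_eq_intros)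
  from DERIV_chain2[OF assms(2)[of "x + 1"] this]
  have "((\<lambda>y. f (y + 1)) has_real_derivative f' (x + 1)) (at x)" by simp
  moreover have "(\<lambda>y. f (y + 1)) = f" using assms(1) by (auto simp: periodic1_def)
  ultimately show "f' (x + 1) = f' x" using DERIV_unique assms(2) by metis
qed

lemma periodic1_deriv_has_integral_0:
  assumes "periodic1 g" and "\<And>x. (g has_real_derivative g' x) (at x)"
  shows "(g' has_integral 0) {0..1}"
  using has_integral_real_deriv[OF assms(2), of 0 1] assms(1) unfolding periodic1_def
  by (metis add_0 diff_self zero_le_one)

lemma periodic1_pointwise_limit:
  assumes "\<And>n. periodic1 (f n)" and "\<And>x. (\<lambda>n. f n x) \<longlonglongrightarrow> g x"
  shows "periodic1 g"
  unfolding periodic1_def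
proof
  fix x
  have "(\<lambda>n. f n x) \<longlonglongrightarrow> g (x + 1)"
    using assms(2)[of "x + 1"] assms(1) unfolding periodic1_def by simp
  then show "g (x + 1) = g x" using assms(2)[of x] LIMSEQ_unique by blast
qed

lemma abs_le_integral_abs_plus_integral_abs_deriv:
  fixes g :: "real \<Rightarrow> real"
  assumes g': "\<And>x. (g has_real_derivative g' x) (at x)" and "continuous_on UNIV g'"
    and x: "x \<in> {0..1}"
  shows "\<bar>g x\<bar> \<le> integral {0..1} (\<lambda>t. \<bar>g t\<bar>) + integral {0..1} (\<lambda>t. \<bar>g' t\<bar>)"
proof -
  have cg: "continuous_on UNIV (\<lambda>t. \<bar>g t\<bar>)"
    using continuous_on_if_has_real_derivative[OF g'] by (intro continuous_intros)
  have cg': "continuous_on UNIV (\<lambda>t. \<bar>g' t\<bar>)" using assms(2) by (intro continuous_intros)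
  obtain y where y: "y \<in> {0..1}" "\<And>t. t \<in> {0..1} \<Longrightarrow> \<bar>g y\<bar> \<le> \<bar>g t\<bar>"
    using continuous_attains_inf[of "{0..1::real}" "\<lambda>t. \<bar>g t\<bar>"] continuous_on_subset[OF cg] by auto
  have "\<bar>g y\<bar> = integral {0..1::real} (\<lambda>_. \<bar>g y\<bar>)" by simp
  also have "\<dots> \<le> integral {0..1} (\<lambda>t. \<bar>g t\<bar>)"
    using y by (intro integral_le integrable_const_ivl integrable_on_Icc_if_continuous[OF cg]) auto
  finally have "\<bar>g y\<bar> \<le> integral {0..1} (\<lambda>t. \<bar>g t\<bar>)" .
  moreover have "\<bar>g x - g y\<bar> \<le> integral {0..1} (\<lambda>t. \<bar>g' t\<bar>)"
  proof -
    define a b where "a = min x y" and "b = max x y"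
    have ab: "a \<le> b" "{a..b} \<subseteq> {0..1}" using x y unfolding a_def b_def by auto
    have "\<bar>g x - g y\<bar> = \<bar>integral {a..b} g'\<bar>"
      using integral_unique[OF has_integral_real_deriv[OF g' ab(1)]]
      unfolding a_def b_def by (cases "x \<le> y") (auto simp: min_def max_def)
    also have "\<dots> \<le> integral {a..b} (\<lambda>t. \<bar>g' t\<bar>)"
      using integral_norm_bound_integral[OF integrable_on_Icc_if_continuous[OF assms(2)]
          integrable_on_Icc_if_continuous[OF cg']] by simp
    also have "\<dots> \<le> integral {0..1} (\<lambda>t. \<bar>g' t\<bar>)"
      by (rule integral_subset_le[OF ab(2)]) (auto intro: integrable_on_Icc_if_continuous[OF cg'])
    finally show ?thesis .
  qed
  ultimately show ?thesis by linarith
qed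

lemma periodic1_abs_le_integral_bound:
  fixes g S :: "real \<Rightarrow> real"
  assumes "periodic1 g" and g': "\<And>x. (g has_real_derivative g' x) (at x)" "continuous_on UNIV g'"
    and S: "continuous_on UNIV S" and le: "\<And>x. \<bar>g x\<bar> + \<bar>g' x\<bar> \<le> A + c * S x"
    and "integral {0..1} S \<le> S0" and "c \<ge> 0"
  shows "\<bar>g x\<bar> \<le> A + c * S0"
proof (rule periodic1_abs_le[OF assms(1)])
  fix x :: real assume x: "x \<in> {0..1}"
  have cg: "continuous_on UNIV (\<lambda>t. \<bar>g t\<bar>)"
    using continuous_on_if_has_real_derivative[OF g'(1)] by (intro continuous_intros)
  have cg': "continuous_on UNIV (\<lambda>t. \<bar>g' t\<bar>)" using g'(2) by (intro continuous_intros)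
  have cS: "continuous_on UNIV (\<lambda>t. A + c * S t)" using S by (intro continuous_intros)
  have "\<bar>g x\<bar> \<le> integral {0..1} (\<lambda>t. \<bar>g t\<bar>) + integral {0..1} (\<lambda>t. \<bar>g' t\<bar>)"
    by (rule abs_le_integral_abs_plus_integral_abs_deriv[OF g' x])
  also have "\<dots> = integral {0..1} (\<lambda>t. \<bar>g t\<bar> + \<bar>g' t\<bar>)"
    by (simp add: integral_add integrable_on_Icc_if_continuous cg cg')
  also have "\<dots> \<le> integral {0..1} (\<lambda>t. A + c * S t)"
    by (intro integral_le integrable_on_Icc_if_continuous cS continuous_intros cg cg' le)
  also have "\<dots> = A + c * integral {0..1} S"
    using has_integral_add[OF has_integral_const_real[of A 0 1]
        has_integral_mult_right[OF integrable_integral[OF integrable_on_Icc_if_continuous[OF S]]]]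
    by (simp add: integral_unique)
  also have "\<dots> \<le> A + c * S0" using assms(6,7) by (simp add: mult_left_mono)
  finally show "\<bar>g x\<bar> \<le> A + c * S0" .
qed

lemma holder_half_if_periodic1_C1:
  assumes "periodic1 f" and f': "\<And>x. (f has_real_derivative f' x) (at x)"
    and "continuous_on UNIV f'"
  shows "holder_half f"
proof -
  obtain L where L: "\<And>x. \<bar>f' x\<bar> \<le> L"
    using periodic1_bounded[OF periodic1_deriv[OF assms(1) f'] assms(3)] by blast
  obtain M where M: "\<And>x. \<bar>f x\<bar> \<le> M"
    using periodic1_bounded[OF assms(1) continuous_on_if_has_real_derivative[OF f']] by blast
  have nonneg: "L \<ge> 0" "M \<ge> 0" using L[of 0] M[of 0] by linarith+
  have "\<bar>f x - f y\<bar> \<le> (L + 2 * M) * \<bar>x - y\<bar> powr (1/2)" for x y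
  proof (cases "\<bar>x - y\<bar> \<le> 1")
    case True
    have "\<bar>f x - f y\<bar> \<le> L * \<bar>x - y\<bar>" by (rule abs_diff_le_if_abs_deriv_le[OF f' L])
    also have "\<dots> \<le> L * \<bar>x - y\<bar> powr (1/2)"
    proof (rule mult_left_mono)
      have "\<bar>x - y\<bar> = \<bar>x - y\<bar> powr 1" by simp
      also have "\<dots> \<le> \<bar>x - y\<bar> powr (1/2)" by (rule powr_mono') (use True in auto)
      finally show "\<bar>x - y\<bar> \<le> \<bar>x - y\<bar> powr (1/2)" .
    qed (rule nonneg)
    finally have "\<bar>f x - f y\<bar> \<le> L * \<bar>x - y\<bar> powr (1/2)" .
    moreover have "0 \<le> 2 * M * \<bar>x - y\<bar> powr (1/2)" using nonneg by simp
    ultimately show ?thesis unfolding distrib_right by linarith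
  next
    case False
    then have "1 \<le> \<bar>x - y\<bar> powr (1/2)" by (intro ge_one_powr_ge_zero) auto
    then have "2 * M \<le> 2 * M * \<bar>x - y\<bar> powr (1/2)"
      using nonneg mult_left_mono[of 1 _ "2 * M"] by simp
    moreover have "\<bar>f x - f y\<bar> \<le> 2 * M" using M[of x] M[of y] by linarith
    moreover have "0 \<le> L * \<bar>x - y\<bar> powr (1/2)" using nonneg by simp
    ultimately show ?thesis unfolding distrib_right by linarith
  qed
  then show ?thesis unfolding holder_half_def by blast
qed

section \<open>Pointwise limits of equi-Lipschitz functions\<close>

lemma continuous_on_pointwise_limit_bounded_deriv:
  fixes f f' :: "nat \<Rightarrow> real \<Rightarrow> real"
  assumes f': "\<And>n x. (f n has_real_derivative f' n x) (at x)" and "\<And>n x. \<bar>f' n x\<bar> \<le> B"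
    and lim: "\<And>x. (\<lambda>n. f n x) \<longlonglongrightarrow> g x"
  shows "continuous_on S g"
proof (rule lipschitz_on_continuous_on[of B], rule lipschitz_onI)
  fix x y :: real
  have "(\<lambda>n. \<bar>f n x - f n y\<bar>) \<longlonglongrightarrow> \<bar>g x - g y\<bar>" by (intro tendsto_intros lim)
  then have "\<bar>g x - g y\<bar> \<le> B * \<bar>x - y\<bar>"
    by (rule LIMSEQ_le_const2) (use abs_diff_le_if_abs_deriv_le[OF f' assms(2)] in auto)
  then show "dist (g x) (g y) \<le> B * dist x y" by (simp add: dist_real_def)
  show "0 \<le> B" using assms(2)[of 0 0] by linarith
qed

lemma norm_Pair_Pair_le: "norm ((a, b), (c, d)) \<le> \<bar>a\<bar> + \<bar>b\<bar> + \<bar>c\<bar> + \<bar>d::real\<bar>"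
  using norm_Pair_le[of "(a, b)" "(c, d)"] norm_Pair_le[of a b] norm_Pair_le[of c d] by simp

lemma has_real_derivative_pointwise_limit:
  fixes F f :: "nat \<Rightarrow> real \<Rightarrow> real"
  assumes F': "\<And>n x. (F n has_real_derivative f n x) (at x)" and bound: "\<And>n x. \<bar>f n x\<bar> \<le> B"
    and F: "\<And>x. (\<lambda>n. F n x) \<longlonglongrightarrow> G x" and f: "\<And>x. (\<lambda>n. f n x) \<longlonglongrightarrow> g x"
    and g: "continuous_on UNIV g"
  shows "(G has_real_derivative g x) (at x)"
proof -
  have G_eq: "G y = G a + integral {a..y} g" if "a \<le> y" for a y
  proof -
    have "(g has_integral (G y - G a)) {a..y}"
    proof (rule has_integral_dominated_convergence)
      show "(f n has_integral (F n y - F n a)) {a..y}" for n by (rule has_integral_real_deriv[OF F' that])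
      show "(\<lambda>_. B) integrable_on {a..y}" by (rule integrable_const_ivl)
      show "\<forall>t\<in>{a..y}. norm (f n t) \<le> B" for n using bound by simp
      show "\<forall>t\<in>{a..y}. (\<lambda>n. f n t) \<longlonglongrightarrow> g t" using f by blast
      show "(\<lambda>n. F n y - F n a) \<longlonglongrightarrow> G y - G a" by (intro tendsto_intros F)
    qed
    then show ?thesis by (simp add: integral_unique)
  qed
  have "((\<lambda>t. integral {x - 1..t} g) has_real_derivative g x) (at x within {x - 1..x + 1})"
    by (rule integral_has_real_derivative[OF continuous_on_subset[OF g]]) auto
  moreover have "x \<in> interior {x - 1..x + 1}" by simp
  ultimately have "((\<lambda>t. integral {x - 1..t} g) has_real_derivative g x) (at x)"
    by (simp only: at_within_interior)
  then have "((\<lambda>t. G (x - 1) + integral {x - 1..t} g) has_real_derivative g x) (at x)"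
    by (auto intro!: derivative_eq_intros)
  then show ?thesis
  proof (rule has_field_derivative_transform_within_open[of _ _ _ "{x - 1<..<x + 1}"])
    show "G (x - 1) + integral {x - 1..t} g = G t" if "t \<in> {x - 1<..<x + 1}" for t
      using G_eq[of "x - 1" t] that by simp
  qed auto
qed

lemma Lipschitz_convergent_subsequence:
  fixes f :: "nat \<Rightarrow> real \<Rightarrow> 'a::euclidean_space"
  assumes bound: "\<And>n x. norm (f n x) \<le> M"
    and Lipschitz: "\<And>n x y. dist (f n x) (f n y) \<le> L * dist x y"
  obtains k where "strict_mono k" and "\<And>x. convergent (\<lambda>n. f (k n) x)"
proof -
  have "\<exists>k. strict_mono k \<and> (\<forall>q\<in>\<rat>. \<exists>l. (\<lambda>n. f (k n) q) \<longlonglongrightarrow> l)"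
    by (rule function_convergent_subsequence[OF countable_rat, of f M]) (use bound in auto)
  then obtain k where k: "strict_mono k" "\<And>q. q \<in> \<rat> \<Longrightarrow> \<exists>l. (\<lambda>n. f (k n) q) \<longlonglongrightarrow> l"
    by blast
  have "Cauchy (\<lambda>n. f (k n) x)" for x
  proof (rule metric_CauchyI)
    fix e :: real assume "e > 0"
    define d where "d = e / (3 * (\<bar>L\<bar> + 1))"
    have "d > 0" unfolding d_def using \<open>e > 0\<close> by (simp add: add_pos_nonneg)
    then obtain q where q: "q \<in> \<rat>" "x - d < q" "q < x + d"
      using Rats_dense_in_real[of "x - d" "x + d"] by auto
    have near: "dist (f n x) (f n q) \<le> e / 3" for n
    proof -
      have "dist (f n x) (f n q) \<le> L * \<bar>x - q\<bar>" using Lipschitz by (simp add: dist_real_def)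
      also have "\<dots> \<le> \<bar>L\<bar> * d" using q by (intro mult_mono) auto
      also have "\<dots> \<le> e / 3" unfolding d_def using \<open>e > 0\<close> by (simp add: field_simps)
      finally show ?thesis .
    qed
    obtain N where N: "\<And>m n. N \<le> m \<Longrightarrow> N \<le> n \<Longrightarrow> dist (f (k m) q) (f (k n) q) < e / 3"
      using k(2)[OF q(1)] convergent_Cauchy[unfolded convergent_def] metric_CauchyD \<open>e > 0\<close>
      by (metis divide_pos_pos zero_less_numeral)
    have "dist (f (k m) x) (f (k n) x) < e" if "N \<le> m" "N \<le> n" for m n
      using dist_triangle[of "f (k m) x" "f (k n) x" "f (k m) q"]
        dist_triangle[of "f (k m) q" "f (k n) x" "f (k n) q"] near[of "k m"]
        near[of "k n"] dist_commute[of "f (k n) q" "f (k n) x"] N[OF that] by linarith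
    then show "\<exists>N. \<forall>m\<ge>N. \<forall>n\<ge>N. dist (f (k m) x) (f (k n) x) < e" by blast
  qed
  then show thesis using that k(1) Cauchy_convergent by blast
qed

lemma convergent_subsequence_bounded_C2:
  fixes u u' u'' m m' m'' :: "nat \<Rightarrow> real \<Rightarrow> real"
  assumes "\<And>n x. (u n has_real_derivative u' n x) (at x)" "\<And>n x. (u' n has_real_derivative u'' n x) (at x)"
    and "\<And>n x. (m n has_real_derivative m' n x) (at x)" "\<And>n x. (m' n has_real_derivative m'' n x) (at x)"
    and B: "\<And>n x. \<bar>u n x\<bar> \<le> B \<and> \<bar>u' n x\<bar> \<le> B \<and> \<bar>u'' n x\<bar> \<le> B \<and>
                   \<bar>m n x\<bar> \<le> B \<and> \<bar>m' n x\<bar> \<le> B \<and> \<bar>m'' n x\<bar> \<le> B"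
  obtains k U U' M M' where "strict_mono k"
    and "\<And>x. (\<lambda>n. u (k n) x) \<longlonglongrightarrow> U x" "\<And>x. (\<lambda>n. u' (k n) x) \<longlonglongrightarrow> U' x"
    and "\<And>x. (\<lambda>n. m (k n) x) \<longlonglongrightarrow> M x" "\<And>x. (\<lambda>n. m' (k n) x) \<longlonglongrightarrow> M' x"
proof -
  define X where "X n x = ((u n x, u' n x), (m n x, m' n x))" for n x
  have "norm (X n x) \<le> 4 * B" for n x
    using norm_Pair_Pair_le[of "u n x" "u' n x" "m n x" "m' n x"] B[of n x] unfolding X_def by linarith
  moreover have "dist (X n x) (X n y) \<le> 4 * B * dist x y" for n x y
  proof -
    have "\<bar>u n x - u n y\<bar> \<le> B * \<bar>x - y\<bar>" "\<bar>u' n x - u' n y\<bar> \<le> B * \<bar>x - y\<bar>"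
      "\<bar>m n x - m n y\<bar> \<le> B * \<bar>x - y\<bar>" "\<bar>m' n x - m' n y\<bar> \<le> B * \<bar>x - y\<bar>"
      by (rule abs_diff_le_if_abs_deriv_le[OF assms(1)] abs_diff_le_if_abs_deriv_le[OF assms(2)]
          abs_diff_le_if_abs_deriv_le[OF assms(3)] abs_diff_le_if_abs_deriv_le[OF assms(4)],
          use B in blast)+
    then show ?thesis
      using norm_Pair_Pair_le[of "u n x - u n y" "u' n x - u' n y" "m n x - m n y" "m' n x - m' n y"]
      unfolding X_def dist_norm dist_real_def by simp
  qed
  ultimately obtain k where k: "strict_mono k" "\<And>x. convergent (\<lambda>n. X (k n) x)"
    using Lipschitz_convergent_subsequence by blast
  define Y where "Y x = lim (\<lambda>n. X (k n) x)" for x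
  have Y: "(\<lambda>n. X (k n) x) \<longlonglongrightarrow> Y x" for x
    unfolding Y_def using k(2) convergent_LIMSEQ_iff by blast
  show thesis
  proof (rule that[OF k(1)])
    show "(\<lambda>n. u (k n) x) \<longlonglongrightarrow> fst (fst (Y x))" "(\<lambda>n. u' (k n) x) \<longlonglongrightarrow> snd (fst (Y x))"
      "(\<lambda>n. m (k n) x) \<longlonglongrightarrow> fst (snd (Y x))" "(\<lambda>n. m' (k n) x) \<longlonglongrightarrow> snd (snd (Y x))" for x
      using tendsto_fst[OF tendsto_fst[OF Y]] tendsto_snd[OF tendsto_fst[OF Y]]
        tendsto_fst[OF tendsto_snd[OF Y]] tendsto_snd[OF tendsto_snd[OF Y]]
      unfolding X_def by simp_all
  qed
qed

lemma C1_differentiable_on_UNIV_iff: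
  fixes f :: "real \<Rightarrow> real"
  shows "f C1_differentiable_on UNIV \<longleftrightarrow>
    (\<exists>f'. (\<forall>x. (f has_real_derivative f' x) (at x)) \<and> continuous_on UNIV f')"
  by (simp add: C1_differentiable_on_def has_real_derivative_iff_has_vector_derivative)

lemma C1_differentiable_on_compose_real:
  fixes g :: "real \<Rightarrow> real"
  assumes "g C1_differentiable_on T" and "f C1_differentiable_on S" and "f ` S \<subseteq> T"
  shows "(\<lambda>x. g (f x)) C1_differentiable_on S"
proof -
  obtain g' f' where g': "\<And>y. y \<in> T \<Longrightarrow> (g has_real_derivative g' y) (at y)" "continuous_on T g'"
    and f': "\<And>x. x \<in> S \<Longrightarrow> (f has_real_derivative f' x) (at x)" "continuous_on S f'"
    using assms(1,2) by (auto simp: C1_differentiable_on_def has_real_derivative_iff_has_vector_derivative)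
  have "continuous_on S f"
    using f'(1) by (meson DERIV_isCont continuous_at_imp_continuous_on)
  then have "continuous_on S (\<lambda>x. g' (f x) * f' x)"
    using assms(3) by (intro continuous_intros continuous_on_compose2[OF g'(2)] f'(2))
  moreover have "((\<lambda>x. g (f x)) has_real_derivative g' (f x) * f' x) (at x)" if "x \<in> S" for x
    using that assms(3) by (intro DERIV_chain2[OF g'(1) f'(1)]) auto
  ultimately show ?thesis
    unfolding C1_differentiable_on_def has_real_derivative_iff_has_vector_derivative[symmetric]
    by (intro exI[of _ "\<lambda>x. g' (f x) * f' x"] conjI ballI)
qed

lemma C1_differentiable_on_powr: "(\<lambda>t. t powr a) C1_differentiable_on {0<..}"
proof -
  have "continuous_on {0<..} (\<lambda>t. a * t powr (a - 1))" by (intro continuous_intros) auto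
  then show ?thesis
    unfolding C1_differentiable_on_def has_real_derivative_iff_has_vector_derivative[symmetric]
    by (intro exI[of _ "\<lambda>t. a * t powr (a - 1)"] conjI ballI has_real_derivative_powr) simp_all
qed

lemma C1_differentiable_on_divide:
  fixes f g :: "real \<Rightarrow> real"
  assumes "f C1_differentiable_on S" and "g C1_differentiable_on S" and "\<And>x. x \<in> S \<Longrightarrow> g x \<noteq> 0"
  shows "(\<lambda>x. f x / g x) C1_differentiable_on S"
proof -
  have "continuous_on (- {0}) (\<lambda>t::real. - (inverse t ^ Suc (Suc 0)))"
    by (intro continuous_intros) auto
  then have "(\<lambda>t. inverse t :: real) C1_differentiable_on - {0}"
    unfolding C1_differentiable_on_def has_real_derivative_iff_has_vector_derivative[symmetric]
    by (intro exI[of _ "\<lambda>t. - (inverse t ^ Suc (Suc 0))"] conjI ballI DERIV_inverse) simp_all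
  moreover have "g ` S \<subseteq> - {0}" using assms(3) by auto
  ultimately have "(\<lambda>x. inverse (g x)) C1_differentiable_on S"
    by (rule C1_differentiable_on_compose_real[OF _ assms(2)])
  then show ?thesis using assms(1) by (simp add: divide_inverse)
qed

lemma C2_half_derivatives:
  assumes "C2_half f"
  shows "(f has_real_derivative deriv f x) (at x)"
    and "(deriv f has_real_derivative deriv (deriv f) x) (at x)"
    and "continuous_on UNIV (deriv (deriv f))"
  using Ck_has_real_derivative[of 2 f 0 x] Ck_has_real_derivative[of 2 f 1 x] assms
  unfolding C2_half_def Ck_def by (simp_all add: numeral_2_eq_2)

lemma C2_half_if_periodic1_C3:
  assumes "periodic1 f" and f': "\<And>x. (f has_real_derivative f' x) (at x)"
    and f'': "\<And>x. (f' has_real_derivative f'' x) (at x)" and "f'' C1_differentiable_on UNIV"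
  shows "C2_half f"
proof -
  obtain f''' where f''': "\<And>x. (f'' has_real_derivative f''' x) (at x)" "continuous_on UNIV f'''"
    using assms(4) unfolding C1_differentiable_on_UNIV_iff by blast
  have "deriv f = f'" "deriv f' = f''" using DERIV_imp_deriv f' f'' by blast+
  then have derivs: "(deriv ^^ 2) f = f''" "(deriv ^^ 1) f = f'" by (simp_all add: numeral_2_eq_2)
  have "periodic1 f''" using periodic1_deriv[OF periodic1_deriv[OF assms(1) f'] f''] .
  then have "holder_half f''" using holder_half_if_periodic1_C1[OF _ f'''] by blast
  moreover have "(deriv ^^ j) f differentiable (at x)" if "j < 2" for j x
  proof -
    have "f differentiable (at x)" "f' differentiable (at x)"
      using f' f'' real_differentiable_def by blast+
    then show ?thesis using less_2_cases[OF that] derivs(2) by auto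
  qed
  ultimately show ?thesis
    unfolding C2_half_def Ck_def derivs
    using assms(1) continuous_on_if_has_real_derivative[OF f'''(1)] by blast
qed

text \<open>The hypotheses of the theorem as they are used: of (A1) and (A2) only the bounds with the
  coercive term dropped, of (A7) the growth bound on \<open>H'\<close>, and \<open>KV\<close> bounds \<open>|V|\<close>.\<close>

locale mfg_system =
  fixes H V :: "real \<Rightarrow> real" and \<alpha> \<gamma> \<epsilon> a1 b1 b3 Cb KV :: real
  assumes H_C4: "Ck 4 H" and V_C2: "Ck 2 V"
    and alpha_pos: "\<alpha> > 0" and gamma: "1 < \<gamma>" "\<gamma> < 2" and H_convex: "convex_on UNIV H"
    and eps: "0 < \<epsilon>" "\<epsilon> \<le> 1"
    and H_lower: "\<And>p. - b1 \<le> H p" and H_upper: "\<And>p. H p \<le> b1 + b3 * \<bar>p\<bar> powr \<gamma>"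
    and b3_nonneg: "b3 \<ge> 0"
    and Lagrangian_lower: "\<And>p. - a1 \<le> p * deriv H p - H p" and a1_nonneg: "a1 \<ge> 0"
    and H'_upper: "\<And>p. \<bar>deriv H p\<bar> \<le> Cb * (1 + \<bar>p\<bar> powr (\<gamma> - 1))" and Cb_nonneg: "Cb \<ge> 0"
    and V_bound: "\<And>x. \<bar>V x\<bar> \<le> KV"
begin

abbreviation "H' \<equiv> deriv H"

abbreviation "H'' \<equiv> deriv H'"

lemma H_deriv: "(H has_real_derivative H' p) (at p)"
  using Ck_has_real_derivative[OF H_C4, of 0] by simp

lemma H'_deriv: "(H' has_real_derivative H'' p) (at p)"
  using Ck_has_real_derivative[OF H_C4, of 1] by simp

lemma H''_deriv: "(H'' has_real_derivative deriv H'' p) (at p)"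
  using Ck_has_real_derivative[OF H_C4, of 2] by (simp add: numeral_2_eq_2)

lemma H'''_continuous: "continuous_on UNIV (deriv H'')"
  using Ck_has_real_derivative[OF H_C4, of 3] by (intro continuous_on_if_has_real_derivative)
    (simp add: numeral_3_eq_3)

lemma V_deriv: "(V has_real_derivative deriv V x) (at x)"
  using Ck_has_real_derivative[OF V_C2, of 0] by simp

lemma V'_continuous: "continuous_on UNIV (deriv V)"
  using Ck_has_real_derivative[OF V_C2, of 1] by (intro continuous_on_if_has_real_derivative) simp

lemma continuous_on_H [continuous_intros]: "continuous_on S f \<Longrightarrow> continuous_on S (\<lambda>x. H (f x))"
  by (rule continuous_on_compose2[OF continuous_on_if_has_real_derivative[OF H_deriv]]) auto

lemma continuous_on_H' [continuous_intros]: "continuous_on S f \<Longrightarrow> continuous_on S (\<lambda>x. H' (f x))"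
  by (rule continuous_on_compose2[OF continuous_on_if_has_real_derivative[OF H'_deriv]]) auto

lemma continuous_on_H'' [continuous_intros]: "continuous_on S f \<Longrightarrow> continuous_on S (\<lambda>x. H'' (f x))"
  by (rule continuous_on_compose2[OF continuous_on_if_has_real_derivative[OF H''_deriv]]) auto

lemma continuous_on_V: "continuous_on S V"
  by (rule continuous_on_if_has_real_derivative[OF V_deriv])

lemma tendsto_H [tendsto_intros]: "(f \<longlongrightarrow> l) F \<Longrightarrow> ((\<lambda>x. H (f x)) \<longlongrightarrow> H l) F"
  using isCont_tendsto_compose DERIV_isCont[OF H_deriv] by blast

lemma tendsto_H' [tendsto_intros]: "(f \<longlongrightarrow> l) F \<Longrightarrow> ((\<lambda>x. H' (f x)) \<longlongrightarrow> H' l) F"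
  using isCont_tendsto_compose DERIV_isCont[OF H'_deriv] by blast

lemma tendsto_H'' [tendsto_intros]: "(f \<longlongrightarrow> l) F \<Longrightarrow> ((\<lambda>x. H'' (f x)) \<longlongrightarrow> H'' l) F"
  using isCont_tendsto_compose DERIV_isCont[OF H''_deriv] by blast

lemma has_real_derivative_H' [derivative_intros]:
  "(f has_real_derivative f') (at x within s) \<Longrightarrow> ((\<lambda>y. H' (f y)) has_real_derivative H'' (f x) * f') (at x within s)"
  by (rule DERIV_chain2[OF H'_deriv])

lemma C1_differentiable_on_H:
  "f C1_differentiable_on S \<Longrightarrow> (\<lambda>x. H (f x)) C1_differentiable_on S"
  using C1_differentiable_on_compose_real[of H UNIV f S] H_deriv H'_deriv
  by (metis C1_differentiable_on_UNIV_iff continuous_on_if_has_real_derivative subset_UNIV)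

lemma C1_differentiable_on_H':
  "f C1_differentiable_on S \<Longrightarrow> (\<lambda>x. H' (f x)) C1_differentiable_on S"
  using C1_differentiable_on_compose_real[of H' UNIV f S] H'_deriv H''_deriv
  by (metis C1_differentiable_on_UNIV_iff continuous_on_if_has_real_derivative subset_UNIV)

lemma C1_differentiable_on_H'':
  "f C1_differentiable_on S \<Longrightarrow> (\<lambda>x. H'' (f x)) C1_differentiable_on S"
  using C1_differentiable_on_compose_real[of H'' UNIV f S] H''_deriv H'''_continuous
  by (metis C1_differentiable_on_UNIV_iff subset_UNIV)

lemma C1_differentiable_on_V: "V C1_differentiable_on S"
  using V_deriv V'_continuous C1_differentiable_on_UNIV_iff C1_differentiable_on_subset by blast

lemma H'_mono: "x \<le> y \<Longrightarrow> H' x \<le> H' y"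
proof -
  have tangent: "H' x' * (y' - x') \<le> H y' - H x'" for x' y'
    by (rule convex_on_imp_above_tangent[OF H_convex])
      (auto intro: has_field_derivative_at_within H_deriv)
  assume "x \<le> y"
  then have "H' x * (y - x) \<le> H' y * (y - x)"
    using tangent[of x y] tangent[of y x] by (simp add: algebra_simps)
  then show ?thesis using \<open>x \<le> y\<close> by (cases "x = y") (auto simp: mult_le_cancel_right)
qed

lemma H''_nonneg: "H'' p \<ge> 0"
  by (rule mono_on_imp_deriv_nonneg[of UNIV H']) (auto intro: mono_onI H'_mono H'_deriv)

lemma abs_H_le: "\<bar>H p\<bar> \<le> b1 + b3 * (1 + p\<^sup>2)"
proof -
  have "b3 * \<bar>p\<bar> powr \<gamma> \<le> b3 * (1 + p\<^sup>2)"
    using abs_powr_le_one_plus_square[of \<gamma> p] gamma b3_nonneg by (intro mult_left_mono) auto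
  moreover have "0 \<le> b3 * \<bar>p\<bar> powr \<gamma>" using b3_nonneg by simp
  ultimately show ?thesis using H_lower[of p] H_upper[of p] by linarith
qed

lemma abs_H'_le: "\<bar>H' p\<bar> \<le> Cb * (2 + p\<^sup>2)"
proof -
  have "Cb * (1 + \<bar>p\<bar> powr (\<gamma> - 1)) \<le> Cb * (2 + p\<^sup>2)"
    using abs_powr_le_one_plus_square[of "\<gamma> - 1" p] gamma Cb_nonneg by (intro mult_left_mono) auto
  then show ?thesis using H'_upper[of p] by linarith
qed

lemma KV_nonneg: "KV \<ge> 0"
  using V_bound[of 0] by linarith

definition "cK = KV + a1"

definition "c_energy = 2 * (cK + (1 + cK)\<^sup>2 / (2 * \<epsilon>)) / \<epsilon>"

definition "c_sup = 1 + c_energy / 2"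

definition "c_P = (1 + 2 * c_sup + b1 + b3 + KV + c_sup powr \<alpha>) + (1/2 + b3) * c_energy"

definition "c_Q = (2 + 2 * Cb * c_sup + 2 * c_sup) + (1/2 + Cb * c_sup) * c_energy"

definition "c_u' = c_Q + c_P + \<bar>H' 0\<bar> * c_sup"

definition "c_m' = (c_u' + c_P) / \<epsilon>"

definition "c_rhs_u = 2 * c_sup + b1 + b3 * (1 + c_u'\<^sup>2) + KV + c_sup powr \<alpha>"

definition "c_rhs_m = 2 * c_sup + 1 + Cb * (2 + c_u'\<^sup>2) * c_m'"

lemma cK_nonneg: "cK \<ge> 0"
  unfolding cK_def using KV_nonneg a1_nonneg by simp

lemma c_sup_pos: "c_sup > 0"
proof -
  have "c_energy \<ge> 0"
    unfolding c_energy_def using cK_nonneg eps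
    by (intro divide_nonneg_pos mult_nonneg_nonneg add_nonneg_nonneg) auto
  then show ?thesis unfolding c_sup_def by simp
qed

text \<open>With \<open>(a, b, c, d)\<close> standing for \<open>(u, u', m, m')\<close> at a point \<open>x\<close>, the system \<open>F = 0\<close> is
  linear in \<open>(u'', m'')\<close>: \<open>u'' - \<epsilon> m'' = rhs_u\<close> and \<open>m'' + (H''(u') m + \<epsilon>) u'' = rhs_m\<close>.
  Its determinant is at least \<open>1\<close> when \<open>m > 0\<close>, so the second derivatives are continuous functions
  of the lower order data; this is what lets the equations pass to pointwise limits.\<close>

definition "rhs_u lam x a b c = a + H b + lam * V x - c powr \<alpha> - \<epsilon> * c"

definition "rhs_m a b c d = c - 1 + \<epsilon> * a - H' b * d"

definition "det_uxx b c = 1 + \<epsilon>\<^sup>2 + \<epsilon> * H'' b * c"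

definition "uxx lam x a b c d = (rhs_u lam x a b c + \<epsilon> * rhs_m a b c d) / det_uxx b c"

definition "mxx lam x a b c d = rhs_m a b c d - (H'' b * c + \<epsilon>) * uxx lam x a b c d"

lemma det_uxx_ge_1: "c > 0 \<Longrightarrow> det_uxx b c \<ge> 1"
  unfolding det_uxx_def using eps H''_nonneg[of b] by simp

lemma uxx_mxx_solve:
  assumes "c > 0"
  shows "a - uxx lam x a b c d + H b + lam * V x - c powr \<alpha> - \<epsilon> * (c - mxx lam x a b c d) = 0"
    and "c - mxx lam x a b c d - (H'' b * uxx lam x a b c d * c + H' b * d) - 1
           + \<epsilon> * (a - uxx lam x a b c d) = 0"
proof -
  have "uxx lam x a b c d * det_uxx b c = rhs_u lam x a b c + \<epsilon> * rhs_m a b c d"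
    unfolding uxx_def using det_uxx_ge_1[OF assms, of b] by simp
  then show "a - uxx lam x a b c d + H b + lam * V x - c powr \<alpha> - \<epsilon> * (c - mxx lam x a b c d) = 0"
    unfolding mxx_def det_uxx_def rhs_u_def rhs_m_def by (simp add: algebra_simps power2_eq_square)
  show "c - mxx lam x a b c d - (H'' b * uxx lam x a b c d * c + H' b * d) - 1
      + \<epsilon> * (a - uxx lam x a b c d) = 0"
    unfolding mxx_def rhs_m_def by (simp add: algebra_simps)
qed

lemma continuous_on_rhs_u:
  assumes "continuous_on S a" "continuous_on S b" "continuous_on S c"
    and "\<And>x. x \<in> S \<Longrightarrow> c x > 0"
  shows "continuous_on S (\<lambda>x. rhs_u lam x (a x) (b x) (c x))"
proof -
  have "\<forall>x\<in>S. c x \<noteq> 0" using assms(4) by force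
  then show ?thesis
    unfolding rhs_u_def using assms(1-3) by (intro continuous_intros continuous_on_V) auto
qed

lemma continuous_on_uxx_mxx:
  assumes "continuous_on S a" "continuous_on S b" "continuous_on S c" "continuous_on S d"
    and c_pos: "\<And>x. x \<in> S \<Longrightarrow> c x > 0"
  shows "continuous_on S (\<lambda>x. uxx lam x (a x) (b x) (c x) (d x))"
    and "continuous_on S (\<lambda>x. mxx lam x (a x) (b x) (c x) (d x))"
proof -
  have "continuous_on S (\<lambda>x. rhs_u lam x (a x) (b x) (c x))"
    by (rule continuous_on_rhs_u[OF assms(1-3) c_pos])
  moreover have rhs_m: "continuous_on S (\<lambda>x. rhs_m (a x) (b x) (c x) (d x))"
    unfolding rhs_m_def using assms by (intro continuous_intros)
  moreover have "continuous_on S (\<lambda>x. det_uxx (b x) (c x))"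
    unfolding det_uxx_def using assms by (intro continuous_intros)
  moreover have "det_uxx (b x) (c x) \<noteq> 0" if "x \<in> S" for x
    using det_uxx_ge_1[OF c_pos[OF that], of "b x"] by linarith
  ultimately show uxx: "continuous_on S (\<lambda>x. uxx lam x (a x) (b x) (c x) (d x))"
    unfolding uxx_def by (intro continuous_intros) auto
  show "continuous_on S (\<lambda>x. mxx lam x (a x) (b x) (c x) (d x))"
    unfolding mxx_def using rhs_m uxx assms by (intro continuous_intros)
qed

lemma tendsto_uxx_mxx:
  assumes "lams \<longlonglongrightarrow> l" "A \<longlonglongrightarrow> a" "B \<longlonglongrightarrow> b" "C \<longlonglongrightarrow> c" "D \<longlonglongrightarrow> d" and "c > 0"
  shows "(\<lambda>n. uxx (lams n) x (A n) (B n) (C n) (D n)) \<longlonglongrightarrow> uxx l x a b c d"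
    and "(\<lambda>n. mxx (lams n) x (A n) (B n) (C n) (D n)) \<longlonglongrightarrow> mxx l x a b c d"
proof -
  have "det_uxx b c \<noteq> 0" using det_uxx_ge_1[OF assms(6), of b] by linarith
  then show uxx: "(\<lambda>n. uxx (lams n) x (A n) (B n) (C n) (D n)) \<longlonglongrightarrow> uxx l x a b c d"
    unfolding uxx_def rhs_u_def rhs_m_def det_uxx_def using assms(6)
    by (intro tendsto_intros assms(1-5)) auto
  show "(\<lambda>n. mxx (lams n) x (A n) (B n) (C n) (D n)) \<longlonglongrightarrow> mxx l x a b c d"
    unfolding mxx_def rhs_m_def by (intro tendsto_intros uxx assms(2-5))
qed

lemma C1_differentiable_on_uxx_mxx:
  assumes "a C1_differentiable_on S" "b C1_differentiable_on S" "c C1_differentiable_on S"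
    "d C1_differentiable_on S" and c_pos: "\<And>x. x \<in> S \<Longrightarrow> c x > 0"
  shows "(\<lambda>x. uxx lam x (a x) (b x) (c x) (d x)) C1_differentiable_on S"
    and "(\<lambda>x. mxx lam x (a x) (b x) (c x) (d x)) C1_differentiable_on S"
proof -
  have "(\<lambda>x. c x powr \<alpha>) C1_differentiable_on S"
    using c_pos by (intro C1_differentiable_on_compose_real[OF C1_differentiable_on_powr assms(3)]) auto
  moreover have "det_uxx (b x) (c x) \<noteq> 0" if "x \<in> S" for x
    using det_uxx_ge_1[OF c_pos[OF that], of "b x"] by linarith
  ultimately show uxx: "(\<lambda>x. uxx lam x (a x) (b x) (c x) (d x)) C1_differentiable_on S"
    unfolding uxx_def rhs_u_def rhs_m_def using assms(1-4) unfolding det_uxx_def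
    by (intro C1_differentiable_on_divide C1_differentiable_on_add C1_differentiable_on_diff
        C1_differentiable_on_mult C1_differentiable_on_const C1_differentiable_on_H
        C1_differentiable_on_H' C1_differentiable_on_H'' C1_differentiable_on_V; simp)+
  show "(\<lambda>x. mxx lam x (a x) (b x) (c x) (d x)) C1_differentiable_on S"
    unfolding mxx_def rhs_m_def using uxx assms(1-4)
    by (intro C1_differentiable_on_add C1_differentiable_on_diff C1_differentiable_on_mult
        C1_differentiable_on_const C1_differentiable_on_H' C1_differentiable_on_H''; simp)+
qed

lemma F_zero_iff:
  assumes u': "\<And>x. (u has_real_derivative u' x) (at x)" and u'': "\<And>x. (u' has_real_derivative u'' x) (at x)"
    and m': "\<And>x. (m has_real_derivative m' x) (at x)" and m'': "\<And>x. (m' has_real_derivative m'' x) (at x)"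
  shows "F_zero H V \<alpha> \<epsilon> u m lam \<longleftrightarrow>
    (\<forall>x. u x - u'' x + H (u' x) + lam * V x - m x powr \<alpha> - \<epsilon> * (m x - m'' x) = 0 \<and>
         m x - m'' x - (H'' (u' x) * u'' x * m x + H' (u' x) * m' x) - 1 + \<epsilon> * (u x - u'' x) = 0)"
proof -
  have "deriv u = u'" "deriv u' = u''" "deriv m = m'" "deriv m' = m''"
    using DERIV_imp_deriv u' u'' m' m'' by blast+
  moreover have "deriv (\<lambda>y. H' (u' y) * m y) x = H'' (u' x) * u'' x * m x + H' (u' x) * m' x" for x
    by (rule DERIV_imp_deriv) (rule derivative_eq_intros u'' m' refl | simp)+
  ultimately show ?thesis
    unfolding F_zero_def F1_def F2_def by (simp add: numeral_2_eq_2)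
qed
end

section \<open>A priori estimates\<close>

locale mfg_solution = mfg_system +
  fixes lam :: real and u u' u'' m m' m'' :: "real \<Rightarrow> real"
  assumes lam: "0 \<le> lam" "lam \<le> 1"
    and u_periodic: "periodic1 u" and m_periodic: "periodic1 m"
    and u_deriv: "\<And>x. (u has_real_derivative u' x) (at x)"
    and u'_deriv: "\<And>x. (u' has_real_derivative u'' x) (at x)"
    and m_deriv: "\<And>x. (m has_real_derivative m' x) (at x)"
    and m'_deriv: "\<And>x. (m' has_real_derivative m'' x) (at x)"
    and m_pos: "\<And>x. m x > 0"
    and eq_u: "\<And>x. u x - u'' x + H (u' x) + lam * V x - m x powr \<alpha> - \<epsilon> * (m x - m'' x) = 0"
    and eq_m: "\<And>x. m x - m'' x - (H'' (u' x) * u'' x * m x + H' (u' x) * m' x) - 1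
                 + \<epsilon> * (u x - u'' x) = 0"
begin

lemma u_continuous: "continuous_on UNIV u"
  by (rule continuous_on_if_has_real_derivative[OF u_deriv])

lemma u'_continuous: "continuous_on UNIV u'"
  by (rule continuous_on_if_has_real_derivative[OF u'_deriv])

lemma m_continuous: "continuous_on UNIV m"
  by (rule continuous_on_if_has_real_derivative[OF m_deriv])

lemma m'_continuous: "continuous_on UNIV m'"
  by (rule continuous_on_if_has_real_derivative[OF m'_deriv])

lemma u'_periodic: "periodic1 u'"
  by (rule periodic1_deriv[OF u_periodic u_deriv])

lemma m'_periodic: "periodic1 m'"
  by (rule periodic1_deriv[OF m_periodic m_deriv])

lemma abs_lam_V_le: "\<bar>lam * V x\<bar> \<le> KV"
  using lam V_bound[of x] mult_mono[of lam 1 "\<bar>V x\<bar>" KV] by (simp add: abs_mult)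

lemma abs_eps_mult_le: "\<bar>\<epsilon> * a\<bar> \<le> \<bar>a\<bar>"
  using eps by (simp add: abs_mult mult_left_le_one_le)

definition "energy x = (u x)\<^sup>2 + (u' x)\<^sup>2 + (m x)\<^sup>2 + (m' x)\<^sup>2"

lemma energy_continuous: "continuous_on UNIV energy"
  unfolding energy_def[abs_def]
  using u_continuous u'_continuous m_continuous m'_continuous by (intro continuous_intros)

definition "Q x = m' x + H' (u' x) * m x + \<epsilon> * u' x"

definition "Q' x = m x - 1 + \<epsilon> * u x"

lemma Q_deriv: "(Q has_real_derivative Q' x) (at x)"
proof -
  have "(Q has_real_derivative m'' x + (H'' (u' x) * u'' x * m x + H' (u' x) * m' x) + \<epsilon> * u'' x) (at x)"
    unfolding Q_def[abs_def]
    by (rule derivative_eq_intros u_deriv u'_deriv m_deriv m'_deriv refl | simp add: algebra_simps)+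
  then show ?thesis using eq_m[of x] unfolding Q'_def by (simp add: algebra_simps)
qed

lemma Q_periodic: "periodic1 Q"
  using m_periodic u'_periodic m'_periodic unfolding periodic1_def Q_def by simp

definition "W x = u' x * m x - u x * m' x - H' (u' x) * m x * u x - \<epsilon> * u x * u' x
  - \<epsilon> * m x * m' x"

definition "W' x = u'' x * m x + u' x * m' x - (u' x * m' x + u x * m'' x)
  - (H'' (u' x) * u'' x * m x * u x + H' (u' x) * (m' x * u x + m x * u' x))
  - \<epsilon> * (u' x * u' x + u x * u'' x) - \<epsilon> * (m' x * m' x + m x * m'' x)"

lemma W_deriv: "(W has_real_derivative W' x) (at x)"
  unfolding W_def[abs_def] W'_def
  by (rule derivative_eq_intros u_deriv u'_deriv m_deriv m'_deriv refl | simp add: algebra_simps)+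

lemma W_periodic: "periodic1 W"
  using u_periodic m_periodic u'_periodic m'_periodic unfolding periodic1_def W_def by simp

text \<open>Testing the \<open>u\<close>-equation against \<open>m\<close> and the \<open>m\<close>-equation against \<open>u\<close>, all second order
  terms combine into the exact derivative \<open>W'\<close>. The coercivity (A2) of \<open>p H'(p) - H(p)\<close> leaves
  a term \<open>cK * m\<close>, which is traded for \<open>u\<close> via \<open>Q' = m - 1 + \<epsilon> u\<close>; both \<open>W'\<close> and \<open>Q'\<close>
  integrate to \<open>0\<close> by periodicity.\<close>

lemma energy_le:
  "\<epsilon> / 2 * energy x \<le> - W' x + cK * Q' x + (cK + (1 + cK)\<^sup>2 / (2 * \<epsilon>))"
proof -
  define c where "c = (1 + cK)\<^sup>2 / (2 * \<epsilon>)"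
  have "(u' x * H' (u' x) - H (u' x)) * m x + m x powr \<alpha> * m x + \<epsilon> * energy x
      - (u x + lam * V x * m x - W' x)
    = (m x - m'' x - (H'' (u' x) * u'' x * m x + H' (u' x) * m' x) - 1 + \<epsilon> * (u x - u'' x)) * u x
      - (u x - u'' x + H (u' x) + lam * V x - m x powr \<alpha> - \<epsilon> * (m x - m'' x)) * m x"
    unfolding energy_def W'_def by (simp add: algebra_simps power2_eq_square)
  then have identity: "(u' x * H' (u' x) - H (u' x)) * m x + m x powr \<alpha> * m x + \<epsilon> * energy x
      = u x + lam * V x * m x - W' x"
    using eq_u[of x] eq_m[of x] by simp
  have "(- a1) * m x \<le> (u' x * H' (u' x) - H (u' x)) * m x"
    using Lagrangian_lower[of "u' x"] m_pos[of x] by (intro mult_right_mono) auto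
  moreover have "0 \<le> m x powr \<alpha> * m x" using m_pos[of x] by simp
  moreover have "lam * V x * m x \<le> KV * m x"
    using abs_lam_V_le[of x] m_pos[of x] by (intro mult_right_mono) auto
  moreover have "(1 - cK * \<epsilon>) * u x \<le> \<epsilon> / 2 * (u x)\<^sup>2 + c"
  proof -
    have "0 \<le> (\<epsilon> * u x - (1 - cK * \<epsilon>))\<^sup>2" by simp
    then have "(1 - cK * \<epsilon>) * u x \<le> \<epsilon> / 2 * (u x)\<^sup>2 + (1 - cK * \<epsilon>)\<^sup>2 / (2 * \<epsilon>)"
      using eps by (simp add: field_simps power2_eq_square)
    moreover have "\<bar>1 - cK * \<epsilon>\<bar> \<le> 1 + cK"
      using mult_left_le[of \<epsilon> cK] mult_nonneg_nonneg[OF cK_nonneg less_imp_le[OF eps(1)]]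
        cK_nonneg eps by linarith
    then have "(1 - cK * \<epsilon>)\<^sup>2 \<le> (1 + cK)\<^sup>2"
      using power_mono[of "\<bar>1 - cK * \<epsilon>\<bar>" "1 + cK" 2] by simp
    then have "(1 - cK * \<epsilon>)\<^sup>2 / (2 * \<epsilon>) \<le> c"
      unfolding c_def using eps by (intro divide_right_mono) auto
    ultimately show ?thesis by linarith
  qed
  moreover have "\<epsilon> / 2 * (u x)\<^sup>2 \<le> \<epsilon> / 2 * energy x"
    unfolding energy_def using eps by (intro mult_left_mono) auto
  ultimately have "\<epsilon> / 2 * energy x \<le> - W' x + cK * Q' x + (cK + c)"
    using identity unfolding Q'_def cK_def by (simp add: algebra_simps)
  then show ?thesis unfolding c_def .
qed

lemma integral_energy_le: "integral {0..1} energy \<le> c_energy"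
proof -
  define c where "c = (1 + cK)\<^sup>2 / (2 * \<epsilon>)"
  have "((\<lambda>x. \<epsilon> / 2 * energy x) has_integral (\<epsilon> / 2 * integral {0..1} energy)) {0..1}"
    by (intro has_integral_mult_right integrable_integral integrable_on_Icc_if_continuous energy_continuous)
  moreover have "((\<lambda>x. - W' x + cK * Q' x + (cK + c)) has_integral (cK + c)) {0..1}"
    using has_integral_add[OF has_integral_add[OF
        has_integral_neg[OF periodic1_deriv_has_integral_0[OF W_periodic W_deriv]]
        has_integral_mult_right[OF periodic1_deriv_has_integral_0[OF Q_periodic Q_deriv]]]
        has_integral_const_real[of "cK + c" 0 1]]
    by simp
  ultimately have "\<epsilon> / 2 * integral {0..1} energy \<le> cK + c"
    using has_integral_le energy_le unfolding c_def by blast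
  then show ?thesis unfolding c_energy_def c_def using eps by (simp add: field_simps)
qed

lemma abs_u_le: "\<bar>u x\<bar> \<le> c_sup"
proof -
  have "\<bar>u y\<bar> + \<bar>u' y\<bar> \<le> 1 + 1/2 * energy y" for y
    using two_abs_le_one_plus_square[of "u y"] two_abs_le_one_plus_square[of "u' y"]
      zero_le_power2[of "m y"] zero_le_power2[of "m' y"] unfolding energy_def ring_distribs by linarith
  from periodic1_abs_le_integral_bound[OF u_periodic u_deriv u'_continuous energy_continuous this
      integral_energy_le]
  show ?thesis unfolding c_sup_def by simp
qed

lemma abs_m_le: "\<bar>m x\<bar> \<le> c_sup"
proof -
  have "\<bar>m y\<bar> + \<bar>m' y\<bar> \<le> 1 + 1/2 * energy y" for y
    using two_abs_le_one_plus_square[of "m y"] two_abs_le_one_plus_square[of "m' y"]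
      zero_le_power2[of "u y"] zero_le_power2[of "u' y"] unfolding energy_def ring_distribs by linarith
  from periodic1_abs_le_integral_bound[OF m_periodic m_deriv m'_continuous energy_continuous this
      integral_energy_le]
  show ?thesis unfolding c_sup_def by simp
qed

lemma m_powr_le: "m x powr \<alpha> \<le> c_sup powr \<alpha>"
  using abs_m_le[of x] m_pos[of x] alpha_pos by (intro powr_mono2) auto

definition "P x = u' x - \<epsilon> * m' x"

definition "P' x = rhs_u lam x (u x) (u' x) (m x)"

lemma P_deriv: "(P has_real_derivative P' x) (at x)"
proof -
  have "(P has_real_derivative u'' x - \<epsilon> * m'' x) (at x)"
    unfolding P_def[abs_def] by (rule derivative_eq_intros u'_deriv m'_deriv refl | simp)+
  moreover have "u'' x - \<epsilon> * m'' x = P' x"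
    using eq_u[of x] unfolding P'_def rhs_u_def right_diff_distrib by linarith
  ultimately show ?thesis by simp
qed

lemma abs_rhs_u_le: "\<bar>rhs_u lam x (u x) p (m x)\<bar> \<le> 2 * c_sup + KV + c_sup powr \<alpha> + \<bar>H p\<bar>"
  using abs_u_le[of x] abs_m_le[of x] abs_lam_V_le[of x] m_powr_le[of x] powr_ge_zero[of "m x" \<alpha>]
    abs_eps_mult_le[of "m x"] unfolding rhs_u_def by linarith

lemma abs_P_le: "\<bar>P x\<bar> \<le> c_P"
proof -
  have P'_continuous: "continuous_on UNIV P'"
    unfolding P'_def[abs_def]
    using continuous_on_rhs_u[OF u_continuous u'_continuous m_continuous] m_pos by blast
  have "\<bar>P y\<bar> + \<bar>P' y\<bar> \<le> 1 + 2 * c_sup + b1 + b3 + KV + c_sup powr \<alpha> + (1/2 + b3) * energy y" for y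
  proof -
    have "\<bar>P y\<bar> \<le> 1 + 1/2 * ((u' y)\<^sup>2 + (m' y)\<^sup>2)"
      using two_abs_le_one_plus_square[of "u' y"] two_abs_le_one_plus_square[of "m' y"]
        abs_eps_mult_le[of "m' y"] unfolding P_def ring_distribs by linarith
    moreover have "\<bar>H (u' y)\<bar> \<le> b1 + b3 + b3 * energy y"
    proof -
      have "b3 * (u' y)\<^sup>2 \<le> b3 * energy y"
        using b3_nonneg unfolding energy_def by (intro mult_left_mono) auto
      then show ?thesis using abs_H_le[of "u' y"] by (simp add: distrib_left)
    qed
    moreover have "1/2 * ((u' y)\<^sup>2 + (m' y)\<^sup>2) \<le> 1/2 * energy y"
      using zero_le_power2[of "u y"] zero_le_power2[of "m y"] unfolding energy_def
      by (intro mult_left_mono) linarith+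
    moreover have "(1/2 + b3) * energy y = 1/2 * energy y + b3 * energy y" by (simp add: distrib_right)
    ultimately show ?thesis using abs_rhs_u_le[of y "u' y"] unfolding P'_def by linarith
  qed
  from periodic1_abs_le_integral_bound[OF _ P_deriv P'_continuous energy_continuous this
      integral_energy_le]
  show ?thesis
    using u'_periodic m'_periodic b3_nonneg unfolding c_P_def periodic1_def P_def by simp
qed

lemma abs_Q_le: "\<bar>Q x\<bar> \<le> c_Q"
proof -
  have Q'_continuous: "continuous_on UNIV Q'"
    unfolding Q'_def[abs_def] using u_continuous m_continuous by (intro continuous_intros)
  have "\<bar>Q y\<bar> + \<bar>Q' y\<bar> \<le> 2 + 2 * Cb * c_sup + 2 * c_sup + (1/2 + Cb * c_sup) * energy y" for y
  proof -
    have "\<bar>H' (u' y) * m y\<bar> \<le> Cb * (2 + (u' y)\<^sup>2) * c_sup"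
      unfolding abs_mult using abs_H'_le[of "u' y"] abs_m_le[of y] Cb_nonneg by (intro mult_mono) auto
    then have "\<bar>Q y\<bar> \<le> 1 + 1/2 * ((u' y)\<^sup>2 + (m' y)\<^sup>2) + Cb * (2 + (u' y)\<^sup>2) * c_sup"
      using two_abs_le_one_plus_square[of "u' y"] two_abs_le_one_plus_square[of "m' y"]
        abs_eps_mult_le[of "u' y"] unfolding Q_def ring_distribs by linarith
    moreover have "\<bar>Q' y\<bar> \<le> 2 * c_sup + 1"
      using abs_m_le[of y] abs_u_le[of y] abs_eps_mult_le[of "u y"] unfolding Q'_def by linarith
    moreover have "Cb * c_sup * (u' y)\<^sup>2 \<le> Cb * c_sup * energy y"
      using Cb_nonneg c_sup_pos unfolding energy_def by (intro mult_left_mono) auto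
    moreover have "1/2 * ((u' y)\<^sup>2 + (m' y)\<^sup>2) \<le> 1/2 * energy y"
      using zero_le_power2[of "u y"] zero_le_power2[of "m y"] unfolding energy_def
      by (intro mult_left_mono) linarith+
    moreover have "Cb * (2 + (u' y)\<^sup>2) * c_sup = 2 * Cb * c_sup + Cb * c_sup * (u' y)\<^sup>2"
      by (simp add: algebra_simps)
    moreover have "(1/2 + Cb * c_sup) * energy y = 1/2 * energy y + Cb * c_sup * energy y"
      by (simp add: distrib_right)
    ultimately show ?thesis by linarith
  qed
  from periodic1_abs_le_integral_bound[OF Q_periodic Q_deriv Q'_continuous energy_continuous this
      integral_energy_le]
  show ?thesis using Cb_nonneg c_sup_pos unfolding c_Q_def by simp
qed

text \<open>Since \<open>H'\<close> is monotone, \<open>(1 + \<epsilon>\<^sup>2) u' + \<epsilon> (H'(u') - H'(0)) m\<close> has the sign of \<open>u'\<close> and dominates it;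
  it is a combination of the bounded fluxes \<open>P\<close> and \<open>Q\<close>.\<close>

lemma abs_u'_le: "\<bar>u' x\<bar> \<le> c_u'"
proof -
  define L where "L = (1 + \<epsilon>\<^sup>2) * u' x + \<epsilon> * (H' (u' x) - H' 0) * m x"
  have "L = \<epsilon> * Q x + P x - \<epsilon> * H' 0 * m x"
    unfolding L_def Q_def P_def by (simp add: algebra_simps power2_eq_square)
  then have "\<bar>L\<bar> \<le> \<bar>\<epsilon> * Q x\<bar> + \<bar>P x\<bar> + \<bar>\<epsilon> * H' 0 * m x\<bar>"
    using abs_triangle_ineq4[of "\<epsilon> * Q x + P x"] abs_triangle_ineq[of "\<epsilon> * Q x" "P x"] by linarith
  moreover have "\<bar>\<epsilon> * H' 0 * m x\<bar> \<le> \<bar>H' 0\<bar> * c_sup"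
    using abs_eps_mult_le[of "H' 0 * m x"] abs_m_le[of x]
      mult_left_mono[of "\<bar>m x\<bar>" c_sup "\<bar>H' 0\<bar>"] by (simp add: abs_mult mult.assoc)
  ultimately have "\<bar>L\<bar> \<le> c_u'"
    using abs_eps_mult_le[of "Q x"] abs_Q_le[of x] abs_P_le[of x] unfolding c_u'_def by linarith
  moreover have "\<bar>u' x\<bar> \<le> \<bar>L\<bar>"
  proof (cases "u' x \<ge> 0")
    case True
    then have "0 \<le> \<epsilon> * (H' (u' x) - H' 0) * m x"
      using H'_mono[of 0 "u' x"] eps m_pos[of x] by simp
    moreover have "(1 + \<epsilon>\<^sup>2) * u' x = u' x + \<epsilon>\<^sup>2 * u' x" by (simp add: algebra_simps)
    moreover have "0 \<le> \<epsilon>\<^sup>2 * u' x" using True by simp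
    ultimately show ?thesis unfolding L_def using True by linarith
  next
    case False
    then have "\<epsilon> * (H' (u' x) - H' 0) * m x \<le> 0"
      using H'_mono[of "u' x" 0] eps m_pos[of x]
      by (simp add: mult_nonpos_nonneg mult_nonneg_nonpos)
    moreover have "u' x * \<epsilon>\<^sup>2 \<le> 0" using False by (simp add: mult_nonpos_nonneg)
    ultimately show ?thesis unfolding L_def using False by (simp add: algebra_simps)
  qed
  ultimately show ?thesis by linarith
qed

lemma abs_m'_le: "\<bar>m' x\<bar> \<le> c_m'"
proof -
  have "\<epsilon> * \<bar>m' x\<bar> \<le> c_u' + c_P"
    using abs_u'_le[of x] abs_P_le[of x] eps unfolding P_def by (simp add: abs_le_iff abs_mult) linarith
  then show ?thesis unfolding c_m'_def using eps by (simp add: field_simps)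
qed

lemma u''_eq: "u'' x = uxx lam x (u x) (u' x) (m x) (m' x)"
proof -
  have "u'' x * det_uxx (u' x) (m x) = rhs_u lam x (u x) (u' x) (m x) + \<epsilon> * rhs_m (u x) (u' x) (m x) (m' x)"
    using eq_u[of x] eq_m[of x] unfolding det_uxx_def rhs_u_def rhs_m_def
    by (simp add: algebra_simps power2_eq_square)
  then show ?thesis
    unfolding uxx_def using det_uxx_ge_1[OF m_pos[of x], of "u' x"] by (simp add: field_simps)
qed

lemma m''_eq: "m'' x = mxx lam x (u x) (u' x) (m x) (m' x)"
  using eq_m[of x] unfolding mxx_def u''_eq[symmetric] rhs_m_def by (simp add: algebra_simps)

lemma abs_rhs_le:
  shows "\<bar>rhs_u lam x (u x) (u' x) (m x)\<bar> \<le> c_rhs_u" and "\<bar>rhs_m (u x) (u' x) (m x) (m' x)\<bar> \<le> c_rhs_m"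
proof -
  have "(u' x)\<^sup>2 \<le> c_u'\<^sup>2" using abs_u'_le[of x] power_mono[of "\<bar>u' x\<bar>" c_u' 2] by simp
  then have "b3 * (u' x)\<^sup>2 \<le> b3 * c_u'\<^sup>2" and "Cb * (u' x)\<^sup>2 \<le> Cb * c_u'\<^sup>2"
    using b3_nonneg Cb_nonneg by (auto intro: mult_left_mono)
  then have H: "\<bar>H (u' x)\<bar> \<le> b1 + b3 * (1 + c_u'\<^sup>2)" and H': "\<bar>H' (u' x)\<bar> \<le> Cb * (2 + c_u'\<^sup>2)"
    using abs_H_le[of "u' x"] abs_H'_le[of "u' x"] by (simp_all add: algebra_simps)
  show "\<bar>rhs_u lam x (u x) (u' x) (m x)\<bar> \<le> c_rhs_u"
    using abs_rhs_u_le[of x "u' x"] H unfolding c_rhs_u_def by linarith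
  have "\<bar>H' (u' x) * m' x\<bar> \<le> Cb * (2 + c_u'\<^sup>2) * c_m'"
    unfolding abs_mult using H' abs_m'_le[of x] by (intro mult_mono) auto
  then show "\<bar>rhs_m (u x) (u' x) (m x) (m' x)\<bar> \<le> c_rhs_m"
    using abs_m_le[of x] abs_u_le[of x] abs_eps_mult_le[of "u x"]
    unfolding rhs_m_def c_rhs_m_def by (simp add: abs_le_iff) linarith
qed

lemma abs_u''_le: "\<bar>u'' x\<bar> \<le> c_rhs_u + c_rhs_m"
proof -
  have det: "det_uxx (u' x) (m x) \<ge> 1" by (rule det_uxx_ge_1[OF m_pos])
  then have "\<bar>u'' x\<bar> \<le> \<bar>u'' x * det_uxx (u' x) (m x)\<bar>"
    by (simp add: abs_mult mult_le_cancel_left1)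
  also have "\<dots> = \<bar>rhs_u lam x (u x) (u' x) (m x) + \<epsilon> * rhs_m (u x) (u' x) (m x) (m' x)\<bar>"
    using det unfolding u''_eq uxx_def by simp
  also have "\<dots> \<le> c_rhs_u + c_rhs_m"
    using abs_rhs_le[of x] abs_eps_mult_le[of "rhs_m (u x) (u' x) (m x) (m' x)"]
    by (simp add: abs_le_iff) linarith
  finally show ?thesis .
qed

lemma abs_m''_le:
  assumes "\<And>p. \<bar>p\<bar> \<le> c_u' \<Longrightarrow> H'' p \<le> h"
  shows "\<bar>m'' x\<bar> \<le> c_rhs_m + (h * c_sup + 1) * (c_rhs_u + c_rhs_m)"
proof -
  have H'': "0 \<le> H'' (u' x)" "H'' (u' x) \<le> h" using H''_nonneg assms abs_u'_le by auto
  have "0 \<le> H'' (u' x) * m x + \<epsilon>" using H'' m_pos[of x] eps by simp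
  moreover have "H'' (u' x) * m x + \<epsilon> \<le> h * c_sup + 1"
    using H'' abs_m_le[of x] m_pos[of x] eps by (intro add_mono mult_mono) auto
  ultimately have "\<bar>(H'' (u' x) * m x + \<epsilon>) * u'' x\<bar> \<le> (h * c_sup + 1) * (c_rhs_u + c_rhs_m)"
    unfolding abs_mult using abs_u''_le[of x] by (intro mult_mono) auto
  then show ?thesis
    using abs_rhs_le(2)[of x] unfolding m''_eq mxx_def u''_eq[symmetric] by linarith
qed
end

context mfg_system
begin

lemma mfg_solution_if_F_zero:
  assumes "lam \<in> {0..1}" and u: "C2_half u" and m: "C2_half m" and "\<And>x. m x > 0"
    and "F_zero H V \<alpha> \<epsilon> u m lam"
  shows "mfg_solution H V \<alpha> \<gamma> \<epsilon> a1 b1 b3 Cb KV lam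
           u (deriv u) (deriv (deriv u)) m (deriv m) (deriv (deriv m))"
  using assms C2_half_derivatives[OF u] C2_half_derivatives[OF m]
    F_zero_iff[OF C2_half_derivatives(1,2)[OF u] C2_half_derivatives(1,2)[OF m]]
  unfolding mfg_solution_def mfg_solution_axioms_def C2_half_def
  by (simp add: mfg_system_axioms)

lemma uniform_C2_bound:
  obtains B where "\<And>lam u u' u'' m m' m'' x.
    mfg_solution H V \<alpha> \<gamma> \<epsilon> a1 b1 b3 Cb KV lam u u' u'' m m' m'' \<Longrightarrow>
      \<bar>u x\<bar> \<le> B \<and> \<bar>u' x\<bar> \<le> B \<and> \<bar>u'' x\<bar> \<le> B \<and> \<bar>m x\<bar> \<le> B \<and> \<bar>m' x\<bar> \<le> B \<and> \<bar>m'' x\<bar> \<le> B"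
proof -
  have "compact (H'' ` {-c_u'..c_u'})"
    by (rule compact_continuous_image[OF continuous_on_if_has_real_derivative[OF H''_deriv] compact_Icc])
  then obtain h where h: "\<And>p. \<bar>p\<bar> \<le> c_u' \<Longrightarrow> H'' p \<le> h"
    using compact_imp_bounded[THEN bounded_iff[THEN iffD1]] by (fastforce simp: abs_le_iff)
  define B where "B = max c_sup (max c_u' (max c_m' (max (c_rhs_u + c_rhs_m) (c_rhs_m + (h * c_sup + 1) * (c_rhs_u + c_rhs_m)))))"
  show thesis
  proof (rule that)
    fix lam u u' u'' m m' m'' x
    assume "mfg_solution H V \<alpha> \<gamma> \<epsilon> a1 b1 b3 Cb KV lam u u' u'' m m' m''"
    then interpret mfg_solution H V \<alpha> \<gamma> \<epsilon> a1 b1 b3 Cb KV lam u u' u'' m m' m'' .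
    have "c_sup \<le> B" "c_u' \<le> B" "c_m' \<le> B" "c_rhs_u + c_rhs_m \<le> B" "c_rhs_m + (h * c_sup + 1) * (c_rhs_u + c_rhs_m) \<le> B"
      unfolding B_def by (simp_all add: le_max_iff_disj)
    then show "\<bar>u x\<bar> \<le> B \<and> \<bar>u' x\<bar> \<le> B \<and> \<bar>u'' x\<bar> \<le> B \<and> \<bar>m x\<bar> \<le> B \<and> \<bar>m' x\<bar> \<le> B \<and> \<bar>m'' x\<bar> \<le> B"
      using abs_u_le[of x] abs_u'_le[of x] abs_u''_le[of x] abs_m_le[of x] abs_m'_le[of x]
        abs_m''_le[OF h, of x] by (intro conjI; linarith)
  qed
qed

lemma F_zero_pointwise_limit:
  fixes lams :: "nat \<Rightarrow> real" and u u' u'' m m' m'' :: "nat \<Rightarrow> real \<Rightarrow> real"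
  assumes sol: "\<And>n. mfg_solution H V \<alpha> \<gamma> \<epsilon> a1 b1 b3 Cb KV (lams n)
                       (u n) (u' n) (u'' n) (m n) (m' n) (m'' n)"
    and bound: "\<And>n x. \<bar>u' n x\<bar> \<le> B \<and> \<bar>u'' n x\<bar> \<le> B \<and> \<bar>m' n x\<bar> \<le> B \<and> \<bar>m'' n x\<bar> \<le> B"
    and lim: "lams \<longlonglongrightarrow> l" "\<And>x. (\<lambda>n. u n x) \<longlonglongrightarrow> U x" "\<And>x. (\<lambda>n. u' n x) \<longlonglongrightarrow> U' x"
      "\<And>x. (\<lambda>n. m n x) \<longlonglongrightarrow> M x" "\<And>x. (\<lambda>n. m' n x) \<longlonglongrightarrow> M' x"
    and M_pos: "\<And>x. M x > 0"
  shows "C2_half U \<and> C2_half M \<and> F_zero H V \<alpha> \<epsilon> U M l"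
proof -
  note u_deriv = mfg_solution.u_deriv[OF sol] and u'_deriv = mfg_solution.u'_deriv[OF sol]
    and m_deriv = mfg_solution.m_deriv[OF sol] and m'_deriv = mfg_solution.m'_deriv[OF sol]
  define U'' where "U'' x = uxx l x (U x) (U' x) (M x) (M' x)" for x
  define M'' where "M'' x = mxx l x (U x) (U' x) (M x) (M' x)" for x
  have U''_lim: "(\<lambda>n. u'' n x) \<longlonglongrightarrow> U'' x" and M''_lim: "(\<lambda>n. m'' n x) \<longlonglongrightarrow> M'' x" for x
    unfolding mfg_solution.u''_eq[OF sol] mfg_solution.m''_eq[OF sol] U''_def M''_def
    using tendsto_uxx_mxx[OF lim(1-5) M_pos] by blast+
  have continuous: "continuous_on UNIV U" "continuous_on UNIV U'"
      "continuous_on UNIV M" "continuous_on UNIV M'"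
    using continuous_on_pointwise_limit_bounded_deriv[OF u_deriv _ lim(2)]
      continuous_on_pointwise_limit_bounded_deriv[OF u'_deriv _ lim(3)]
      continuous_on_pointwise_limit_bounded_deriv[OF m_deriv _ lim(4)]
      continuous_on_pointwise_limit_bounded_deriv[OF m'_deriv _ lim(5)] bound by blast+
  have U''_continuous: "continuous_on UNIV U''" and M''_continuous: "continuous_on UNIV M''"
    unfolding U''_def[abs_def] M''_def[abs_def] using continuous_on_uxx_mxx[OF continuous] M_pos by auto
  then have U_deriv: "(U has_real_derivative U' x) (at x)"
    and U'_deriv: "(U' has_real_derivative U'' x) (at x)"
    and M_deriv: "(M has_real_derivative M' x) (at x)"
    and M'_deriv: "(M' has_real_derivative M'' x) (at x)" for x
    using has_real_derivative_pointwise_limit[OF u_deriv _ lim(2,3)]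
      has_real_derivative_pointwise_limit[OF u'_deriv _ lim(3) U''_lim]
      has_real_derivative_pointwise_limit[OF m_deriv _ lim(4,5)]
      has_real_derivative_pointwise_limit[OF m'_deriv _ lim(5) M''_lim] continuous bound by blast+
  have C1: "U C1_differentiable_on UNIV" "U' C1_differentiable_on UNIV"
      "M C1_differentiable_on UNIV" "M' C1_differentiable_on UNIV"
    unfolding C1_differentiable_on_UNIV_iff
    using U_deriv U'_deriv M_deriv M'_deriv continuous(2,4) U''_continuous M''_continuous by blast+
  then have "U'' C1_differentiable_on UNIV" "M'' C1_differentiable_on UNIV"
    unfolding U''_def[abs_def] M''_def[abs_def] using C1_differentiable_on_uxx_mxx[OF C1] M_pos by auto
  moreover have "periodic1 U" "periodic1 M"
    using periodic1_pointwise_limit[OF mfg_solution.u_periodic[OF sol] lim(2)]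
      periodic1_pointwise_limit[OF mfg_solution.m_periodic[OF sol] lim(4)] .
  ultimately have "C2_half U" "C2_half M"
    using C2_half_if_periodic1_C3 U_deriv U'_deriv M_deriv M'_deriv by blast+
  moreover have "F_zero H V \<alpha> \<epsilon> U M l"
    unfolding F_zero_iff[OF U_deriv U'_deriv M_deriv M'_deriv] U''_def M''_def
    using uxx_mxx_solve[OF M_pos] by blast
  ultimately show ?thesis by blast
qed

lemma closed_solution_parameters:
  assumes "mbar > 0"
  shows "closed {lam \<in> {0..1::real}. \<exists>u m. C2_half u \<and> C2_half m \<and>
                   (\<forall>x. m x \<ge> mbar) \<and> F_zero H V \<alpha> \<epsilon> u m lam}" (is "closed ?\<Lambda>")
  unfolding closed_sequential_limits
proof (intro allI impI, elim conjE)
  fix lams l assume "\<forall>n. lams n \<in> ?\<Lambda>" and lams_lim: "lams \<longlonglongrightarrow> l"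
  then obtain u m where lams: "\<And>n. lams n \<in> {0..1}"
    and um: "\<And>n. C2_half (u n) \<and> C2_half (m n) \<and> (\<forall>x. m n x \<ge> mbar) \<and>
                   F_zero H V \<alpha> \<epsilon> (u n) (m n) (lams n)"
    by (simp only: mem_Collect_eq) metis
  have sol: "mfg_solution H V \<alpha> \<gamma> \<epsilon> a1 b1 b3 Cb KV (lams n) (u n) (deriv (u n))
      (deriv (deriv (u n))) (m n) (deriv (m n)) (deriv (deriv (m n)))" for n
    using um[of n] assms by (intro mfg_solution_if_F_zero[OF lams]) (auto intro: less_le_trans)
  obtain B where B: "\<And>n x. \<bar>u n x\<bar> \<le> B \<and> \<bar>deriv (u n) x\<bar> \<le> B \<and> \<bar>deriv (deriv (u n)) x\<bar> \<le> B \<and>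
      \<bar>m n x\<bar> \<le> B \<and> \<bar>deriv (m n) x\<bar> \<le> B \<and> \<bar>deriv (deriv (m n)) x\<bar> \<le> B"
    using uniform_C2_bound sol by metis
  obtain k U U' M M' where k: "strict_mono k"
    and lim: "\<And>x. (\<lambda>n. u (k n) x) \<longlonglongrightarrow> U x" "\<And>x. (\<lambda>n. deriv (u (k n)) x) \<longlonglongrightarrow> U' x"
      "\<And>x. (\<lambda>n. m (k n) x) \<longlonglongrightarrow> M x" "\<And>x. (\<lambda>n. deriv (m (k n)) x) \<longlonglongrightarrow> M' x"
    by (rule convergent_subsequence_bounded_C2[where u = u and u' = "\<lambda>n. deriv (u n)"
        and u'' = "\<lambda>n. deriv (deriv (u n))" and m = m and m' = "\<lambda>n. deriv (m n)"
        and m'' = "\<lambda>n. deriv (deriv (m n))", OF mfg_solution.u_deriv[OF sol]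
        mfg_solution.u'_deriv[OF sol] mfg_solution.m_deriv[OF sol] mfg_solution.m'_deriv[OF sol] B]) blast
  have M_ge: "M x \<ge> mbar" for x
    using um by (intro LIMSEQ_le_const[OF lim(3)]) auto
  have "C2_half U \<and> C2_half M \<and> F_zero H V \<alpha> \<epsilon> U M l"
  proof (rule F_zero_pointwise_limit)
    show "mfg_solution H V \<alpha> \<gamma> \<epsilon> a1 b1 b3 Cb KV ((lams \<circ> k) n) (u (k n)) (deriv (u (k n)))
        (deriv (deriv (u (k n)))) (m (k n)) (deriv (m (k n))) (deriv (deriv (m (k n))))" for n
      using sol[of "k n"] by simp
    show "\<bar>deriv (u (k n)) x\<bar> \<le> B \<and> \<bar>deriv (deriv (u (k n))) x\<bar> \<le> B \<and>
        \<bar>deriv (m (k n)) x\<bar> \<le> B \<and> \<bar>deriv (deriv (m (k n))) x\<bar> \<le> B" for n x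
      using B[of "k n" x] by blast
    show "(lams \<circ> k) \<longlonglongrightarrow> l" by (rule LIMSEQ_subseq_LIMSEQ[OF lams_lim k])
    show "0 < M x" for x using M_ge[of x] assms by linarith
  qed (rule lim)+
  moreover have "l \<in> {0..1}"
    using lams closed_atLeastAtMost[of 0 "1::real"] lams_lim closed_sequentially by blast
  ultimately show "l \<in> ?\<Lambda>" using M_ge by blast
qed
end

theorem mainTheorem11:
  fixes H V :: "real \<Rightarrow> real" and \<alpha> \<gamma> \<epsilon> mbar :: real
  assumes H_C2: "Ck 2 H"
    and V_cont: "periodic1 V" "continuous_on UNIV V"
    and alpha_pos: "\<alpha> > 0"
    and A1: "\<gamma> > 1" "\<exists>C1 C2 C3. C1 > 0 \<and> C2 > 0 \<and> C3 > 0 \<and>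
              (\<forall>p. - C1 + C2 * \<bar>p\<bar> powr \<gamma> \<le> H p \<and> H p \<le> C1 + C3 * \<bar>p\<bar> powr \<gamma>)"
    and A2: "\<exists>C1 C2 C3. C1 > 0 \<and> C2 > 0 \<and> C3 > 0 \<and>
              (\<forall>p. - C1 + C2 * \<bar>p\<bar> powr \<gamma> \<le> p * deriv H p - H p \<and>
                   p * deriv H p - H p \<le> C1 + C3 * \<bar>p\<bar> powr \<gamma>)"
    and A3: "Ck 2 V"
    and A4: "convex_on UNIV H"
    and A5: "Ck 4 H"
    and A6: "\<gamma> < 2"
    and A7: "\<exists>Cb>0. \<forall>p. \<bar>deriv H p\<bar> \<le> Cb * (1 + \<bar>p\<bar> powr (\<gamma> - 1))"
    and eps: "0 < \<epsilon>" "\<epsilon> \<le> 1"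
    and mbar_pos: "mbar > 0"
    and apriori: "\<And>lam u m. lam \<in> {0..1} \<Longrightarrow> C2_half u \<Longrightarrow> C2_half m \<Longrightarrow>
                    (\<forall>x. m x > 0) \<Longrightarrow> F_zero H V \<alpha> \<epsilon> u m lam \<Longrightarrow> (\<forall>x. m x > mbar)"
  shows "closed {lam \<in> {0..1::real}. \<exists>u m. C2_half u \<and> C2_half m \<and>
                   (\<forall>x. m x \<ge> mbar) \<and> F_zero H V \<alpha> \<epsilon> u m lam}"
proof -
  obtain b1 c b3 where "c > 0" "b3 > 0"
    and A1': "\<And>p. - b1 + c * \<bar>p\<bar> powr \<gamma> \<le> H p \<and> H p \<le> b1 + b3 * \<bar>p\<bar> powr \<gamma>"
    using A1(2) by blast
  obtain a1 c' where "a1 > 0" "c' > 0" and A2': "\<And>p. - a1 + c' * \<bar>p\<bar> powr \<gamma> \<le> p * deriv H p - H p"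
    using A2 by blast
  obtain Cb where "Cb > 0" and A7': "\<And>p. \<bar>deriv H p\<bar> \<le> Cb * (1 + \<bar>p\<bar> powr (\<gamma> - 1))"
    using A7 by blast
  obtain KV where "\<And>x. \<bar>V x\<bar> \<le> KV" using periodic1_bounded[OF V_cont] by blast
  moreover have "- b1 \<le> H p" "- a1 \<le> p * deriv H p - H p" for p
  proof -
    have "0 \<le> c * \<bar>p\<bar> powr \<gamma>" "0 \<le> c' * \<bar>p\<bar> powr \<gamma>" using \<open>c > 0\<close> \<open>c' > 0\<close> by simp_all
    then show "- b1 \<le> H p" "- a1 \<le> p * deriv H p - H p" using A1'[of p] A2'[of p] by linarith+
  qed
  ultimately interpret mfg_system H V \<alpha> \<gamma> \<epsilon> a1 b1 b3 Cb KV
    using A1(1) A1' A3 A4 A5 A6 A7' alpha_pos eps \<open>a1 > 0\<close> \<open>b3 > 0\<close> \<open>Cb > 0\<close>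
    by unfold_locales auto
  show ?thesis by (rule closed_solution_parameters[OF mbar_pos])
qed

end
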